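(* For $k=1,\dots,K$ let $\Delta U_k=U_{wk}-U_{lk}$, $\Delta\tau=\tau_w-\tau_l$ and $D_k=(\Delta U_k-\Delta\tau)/\sqrt{\mathbf V(\Delta U_k)}$, where $$\mathbf V(\Delta U_k)=\frac{n_k-1}{m_kn_k}\big(\xi^{10}_{ww}+\xi^{10}_{ll}-2\xi^{10}_{wl}\big)+\frac{m_k-1}{m_kn_k}\big(\xi^{01}_{ww}+\xi^{01}_{ll}-2\xi^{01}_{wl}\big)+\frac{1}{m_kn_k}\big(\xi^{11}_{ww}+\xi^{11}_{ll}-2\xi^{11}_{wl}\big)>0.$$ Then for any $1\le p<q\le K$ (with nested samples as described), $\mathbf{Cov}(\Delta U_p,\Delta U_q)=\mathbf V(\Delta U_q)$, and consequently $\mathbf{Cov}(D_p,D_q)=\sqrt{\mathbf V(\Delta U_q)/\mathbf V(\Delta U_p)}$.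
   Context: Two-arm setting. Treatment-arm observations $\mathcal D_1,\mathcal D_2,\dots$ are i.i.d. copies of a random element $\mathcal D$, control-arm observations $\mathcal D'_1,\mathcal D'_2,\dots$ are i.i.d. copies of $\mathcal D'$, and the two sequences are mutually independent. Each observation is a vector of $Q$ outcomes ordered by clinical priority, $\mathcal D=(D_1,\dots,D_Q)$. For a treatment observation $\mathcal D_i$ and control observation $\mathcal D'_j$, per-component win/loss indicators $W^{ij}_q,L^{ij}_q\in\{0,1\}$ (never both 1) are defined by type: binary: $W=\mathbb 1\{D_{qi}>D'_{qj}\}$, $L=\mathbb 1\{D_{qi}<D'_{qj}\}$; continuous/ordinal with margin $\epsilon_q\ge0$: $W=\mathbb 1\{D_{qi}>D'_{qj}+\epsilon_q\}$, $L=\mathbb 1\{D_{qi}<D'_{qj}-\epsilon_q\}$; time-to-event $D_q=(Y_q,\delta_q)$ (observed time, event indicator): $W=\delta'_{qj}\mathbb 1\{Y_{qi}>Y'_{qj}\}$, $L=\delta_{qi}\mathbb 1\{Y_{qi}<Y'_{qj}\}$. Tie indicator $\Omega^{ij}_q=(1-W^{ij}_q)(1-L^{ij}_q)$. Win and loss kernels: $\varphi_w(\mathcal D_i;\mathcal D'_j)=W^{ij}_1+\sum_{q=2}^Q\big(\prod_{p=1}^{q-1}\Omega^{ij}_p\big)W^{ij}_q$, $\varphi_l(\mathcal D_i;\mathcal D'_j)=L^{ij}_1+\sum_{q=2}^Q\big(\prod_{p=1}^{q-1}\Omega^{ij}_p\big)L^{ij}_q$. Let $\tau_\nu=\mathbf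 E\varphi_\nu(\mathcal D_1;\mathcal D'_1)$. For $u,v\in\{w,l\}$: $\xi^{10}_{uv}=\mathbf{Cov}[\varphi_u(\mathcal D_1;\mathcal D'_1),\varphi_v(\mathcal D_1;\mathcal D'_2)]$, $\xi^{01}_{uv}=\mathbf{Cov}[\varphi_u(\mathcal D_1;\mathcal D'_1),\varphi_v(\mathcal D_2;\mathcal D'_1)]$, $\xi^{11}_{uv}=\mathbf{Cov}[\varphi_u(\mathcal D_1;\mathcal D'_1),\varphi_v(\mathcal D_1;\mathcal D'_1)]$. Group sequential design with $K$ analyses: at analysis $k$ the data are the first $m_k$ treatment and first $n_k$ control observations, $0=m_0<m_1<\dots<m_K$, $0=n_0<n_1<\dots<n_K$. Sequential win/loss statistics: $U_{\nu k}=\frac{1}{m_kn_k}\sum_{i=1}^{m_k}\sum_{j=1}^{n_k}\varphi_\nu(\mathcal D_i;\mathcal D'_j)$ for $\nu\in\{w,l\}$. *)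

theory Defs
  imports "HOL-Probability.Probability"
begin

text \<open>Binary and continuous/ordinal components
store their value in the real field of the pair (the boolean is ignored);
a time-to-event component stores the observed time Y in the real field and
the event indicator delta in the boolean field.\<close>

datatype outcome_kind = Binary | Margin real | TTE

type_synonym obs = "nat \<Rightarrow> real \<times> bool"

definition obs_space :: "nat \<Rightarrow> obs measure" where
  "obs_space Q = PiM {1..Q} (\<lambda>_. borel \<Otimes>\<^sub>M count_space UNIV)"

definition win_ind :: "(nat \<Rightarrow> outcome_kind) \<Rightarrow> nat \<Rightarrow> obs \<Rightarrow> obs \<Rightarrow> real" where
  "win_ind kind q x y = (case kind q of
      Binary \<Rightarrow> (if fst (x q) > fst (y q) then 1 else 0)
    | Margin e \<Rightarrow> (if fst (x q) > fst (y q) + e then 1 else 0)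
    | TTE \<Rightarrow> (if snd (y q) \<and> fst (x q) > fst (y q) then 1 else 0))"

definition loss_ind :: "(nat \<Rightarrow> outcome_kind) \<Rightarrow> nat \<Rightarrow> obs \<Rightarrow> obs \<Rightarrow> real" where
  "loss_ind kind q x y = (case kind q of
      Binary \<Rightarrow> (if fst (x q) < fst (y q) then 1 else 0)
    | Margin e \<Rightarrow> (if fst (x q) < fst (y q) - e then 1 else 0)
    | TTE \<Rightarrow> (if snd (x q) \<and> fst (x q) < fst (y q) then 1 else 0))"

definition tie_ind :: "(nat \<Rightarrow> outcome_kind) \<Rightarrow> nat \<Rightarrow> obs \<Rightarrow> obs \<Rightarrow> real" where
  "tie_ind kind q x y = (1 - win_ind kind q x y) * (1 - loss_ind kind q x y)"

definition phi_w :: "nat \<Rightarrow> (nat \<Rightarrow> outcome_kind) \<Rightarrow> obs \<Rightarrow> obs \<Rightarrow> real" where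
  "phi_w Q kind x y =
     (\<Sum>q\<in>{1..Q}. (\<Prod>p\<in>{1..<q}. tie_ind kind p x y) * win_ind kind q x y)"

definition phi_l :: "nat \<Rightarrow> (nat \<Rightarrow> outcome_kind) \<Rightarrow> obs \<Rightarrow> obs \<Rightarrow> real" where
  "phi_l Q kind x y =
     (\<Sum>q\<in>{1..Q}. (\<Prod>p\<in>{1..<q}. tie_ind kind p x y) * loss_ind kind q x y)"

definition (in prob_space) covariance :: "('a \<Rightarrow> real) \<Rightarrow> ('a \<Rightarrow> real) \<Rightarrow> real" where
  "covariance X Y = expectation (\<lambda>\<omega>. (X \<omega> - expectation X) * (Y \<omega> - expectation Y))"

end

theory Submission
  imports Defs
begin

text \<open>\<open>\<Delta>U\<^sub>k\<close> is the two-sample U-statistic of the bounded kernel \<open>\<phi> = \<phi>\<^sub>w - \<phi>\<^sub>l\<close>. Because the observations are independent, and identically distributed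
within each arm, the covariance of \<open>\<phi>(D\<^sub>i, D'\<^sub>j)\<close> and \<open>\<phi>(D\<^sub>i\<^sub>', D'\<^sub>j\<^sub>')\<close> depends only on
whether \<open>i = i'\<close> and whether \<open>j = j'\<close>; it vanishes when neither holds. Expanding
\<open>Cov(\<Delta>U\<^sub>p, \<Delta>U\<^sub>q)\<close> bilinearly, every pair \<open>(i, j)\<close> of the earlier (nested) sample meets
the same number of partners of each kind in the later one, namely one with both indices
equal, \<open>n\<^sub>q - 1\<close> sharing only \<open>i\<close> and \<open>m\<^sub>q - 1\<close> sharing only \<open>j\<close>. The factor
\<open>m\<^sub>p n\<^sub>p\<close> cancels and what is left is exactly \<open>V(\<Delta>U\<^sub>q)\<close>.\<close>

lemma measurable_obs_component [measurable]:
  assumes "q \<in> {1..Q}"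
  shows "(\<lambda>z::obs \<times> obs. fst z q) \<in> obs_space Q \<Otimes>\<^sub>M obs_space Q \<rightarrow>\<^sub>M borel \<Otimes>\<^sub>M count_space UNIV"
    and "(\<lambda>z::obs \<times> obs. snd z q) \<in> obs_space Q \<Otimes>\<^sub>M obs_space Q \<rightarrow>\<^sub>M borel \<Otimes>\<^sub>M count_space UNIV"
  using assms unfolding obs_space_def by measurable

lemma measurable_win_ind:
  "q \<in> {1..Q} \<Longrightarrow>
    (\<lambda>z. win_ind kind q (fst z) (snd z)) \<in> borel_measurable (obs_space Q \<Otimes>\<^sub>M obs_space Q)"
  unfolding win_ind_def by (cases "kind q") simp_all

lemma measurable_loss_ind:
  "q \<in> {1..Q} \<Longrightarrow>
    (\<lambda>z. loss_ind kind q (fst z) (snd z)) \<in> borel_measurable (obs_space Q \<Otimes>\<^sub>M obs_space Q)"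
  unfolding loss_ind_def by (cases "kind q") simp_all

lemma measurable_tie_ind:
  "q \<in> {1..Q} \<Longrightarrow>
    (\<lambda>z. tie_ind kind q (fst z) (snd z)) \<in> borel_measurable (obs_space Q \<Otimes>\<^sub>M obs_space Q)"
  unfolding tie_ind_def using measurable_win_ind measurable_loss_ind by measurable

lemma win_ind_bounds: "0 \<le> win_ind kind q x y" "win_ind kind q x y \<le> 1"
  unfolding win_ind_def by (auto split: outcome_kind.split)

lemma loss_ind_bounds: "0 \<le> loss_ind kind q x y" "loss_ind kind q x y \<le> 1"
  unfolding loss_ind_def by (auto split: outcome_kind.split)

lemma tie_ind_bounds: "0 \<le> tie_ind kind q x y" "tie_ind kind q x y \<le> 1"
  unfolding tie_ind_def using win_ind_bounds[of kind q x y] loss_ind_bounds[of kind q x y]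
  by (auto intro: mult_le_one)

definition bounded_kernel :: "'b measure \<Rightarrow> ('b \<Rightarrow> 'b \<Rightarrow> real) \<Rightarrow> bool" where
  "bounded_kernel S f \<longleftrightarrow>
     (\<lambda>z. f (fst z) (snd z)) \<in> borel_measurable (S \<Otimes>\<^sub>M S) \<and> (\<exists>B. \<forall>x y. \<bar>f x y\<bar> \<le> B)"

lemma measurable_kernel_app:
  assumes "(\<lambda>z. f (fst z) (snd z)) \<in> borel_measurable (S \<Otimes>\<^sub>M S)"
    and "a \<in> N \<rightarrow>\<^sub>M S" "b \<in> N \<rightarrow>\<^sub>M S"
  shows "(\<lambda>x. f (a x) (b x)) \<in> borel_measurable N"
  using measurable_compose[OF measurable_Pair[OF assms(2,3)] assms(1)] by simp

lemma bounded_kernel_measurable: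
  "bounded_kernel S f \<Longrightarrow> (\<lambda>z. f (fst z) (snd z)) \<in> borel_measurable (S \<Otimes>\<^sub>M S)"
  by (simp add: bounded_kernel_def)

lemma bounded_kernel_diff:
  assumes "bounded_kernel S u" "bounded_kernel S v"
  shows "bounded_kernel S (\<lambda>x y. u x y - v x y)"
proof -
  obtain Bu Bv where "\<And>x y. \<bar>u x y\<bar> \<le> Bu" "\<And>x y. \<bar>v x y\<bar> \<le> Bv"
    using assms unfolding bounded_kernel_def by blast
  then have "\<bar>u x y - v x y\<bar> \<le> Bu + Bv" for x y
    by (meson abs_triangle_ineq4 add_mono order_trans)
  then show ?thesis
    using assms unfolding bounded_kernel_def by auto
qed

lemma bounded_kernel_prioritized_sum:
  assumes meas: "\<And>q. q \<in> {1..Q} \<Longrightarrow>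
      (\<lambda>z. c q (fst z) (snd z)) \<in> borel_measurable (obs_space Q \<Otimes>\<^sub>M obs_space Q)"
    and bounds: "\<And>q x y. 0 \<le> c q x y" "\<And>q x y. c q x y \<le> 1"
  shows "bounded_kernel (obs_space Q)
    (\<lambda>x y. \<Sum>q\<in>{1..Q}. (\<Prod>p\<in>{1..<q}. tie_ind kind p x y) * c q x y)"
proof -
  have term_bounds: "0 \<le> (\<Prod>p\<in>{1..<q}. tie_ind kind p x y) * c q x y"
    "(\<Prod>p\<in>{1..<q}. tie_ind kind p x y) * c q x y \<le> 1" for q x y
    using tie_ind_bounds bounds by (auto intro!: mult_nonneg_nonneg mult_le_one prod_nonneg prod_le_1)
  have "0 \<le> (\<Sum>q\<in>{1..Q}. (\<Prod>p\<in>{1..<q}. tie_ind kind p x y) * c q x y)"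
    "(\<Sum>q\<in>{1..Q}. (\<Prod>p\<in>{1..<q}. tie_ind kind p x y) * c q x y) \<le> (\<Sum>q\<in>{1..Q}. 1)" for x y
    by (intro sum_nonneg sum_mono term_bounds)+
  then have "\<bar>\<Sum>q\<in>{1..Q}. (\<Prod>p\<in>{1..<q}. tie_ind kind p x y) * c q x y\<bar> \<le> real Q" for x y
    by simp
  moreover have "(\<lambda>z. \<Sum>q\<in>{1..Q}. (\<Prod>p\<in>{1..<q}. tie_ind kind p (fst z) (snd z)) * c q (fst z) (snd z))
      \<in> borel_measurable (obs_space Q \<Otimes>\<^sub>M obs_space Q)"
    using meas measurable_tie_ind
    by (intro borel_measurable_sum borel_measurable_times borel_measurable_prod) auto
  ultimately show ?thesis
    unfolding bounded_kernel_def by blast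
qed

lemma bounded_kernel_phi_w: "bounded_kernel (obs_space Q) (phi_w Q kind)"
  unfolding phi_w_def[abs_def]
  by (intro bounded_kernel_prioritized_sum measurable_win_ind win_ind_bounds)

lemma bounded_kernel_phi_l: "bounded_kernel (obs_space Q) (phi_l Q kind)"
  unfolding phi_l_def[abs_def]
  by (intro bounded_kernel_prioritized_sum measurable_loss_ind loss_ind_bounds)

context prob_space
begin

lemma indep_vars_reindex:
  assumes indep: "indep_vars M' Z I" and "inj_on \<sigma> J" and "\<sigma> ` J \<subseteq> I"
  shows "indep_vars (\<lambda>j. M' (\<sigma> j)) (\<lambda>j. Z (\<sigma> j)) J"
proof -
  have "indep_vars (\<lambda>j. PiM {\<sigma> j} M') (\<lambda>j \<omega>. restrict (\<lambda>i. Z i \<omega>) {\<sigma> j}) J"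
    using assms by (intro indep_vars_restrict[OF indep]) (auto simp: disjoint_family_on_def inj_on_eq_iff)
  then have "indep_vars (\<lambda>j. M' (\<sigma> j)) (\<lambda>j \<omega>. (\<lambda>h. h (\<sigma> j)) (restrict (\<lambda>i. Z i \<omega>) {\<sigma> j})) J"
    by (rule indep_vars_compose2) (auto intro: measurable_component_singleton)
  then show ?thesis by simp
qed

lemma expectation_indep_reindex:
  fixes g :: "('i \<Rightarrow> 'b) \<Rightarrow> real"
  assumes indep: "indep_vars (\<lambda>_. S) Z I"
    and \<sigma>: "inj_on \<sigma> J" "\<sigma> ` J \<subseteq> I" and \<rho>: "inj_on \<rho> J" "\<rho> ` J \<subseteq> I"
    and same_law: "\<And>j. j \<in> J \<Longrightarrow> distr M S (Z (\<sigma> j)) = distr M S (Z (\<rho> j))"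
    and g: "g \<in> borel_measurable (PiM J (\<lambda>_. S))"
  shows "expectation (\<lambda>\<omega>. g (\<lambda>j\<in>J. Z (\<sigma> j) \<omega>)) = expectation (\<lambda>\<omega>. g (\<lambda>j\<in>J. Z (\<rho> j) \<omega>))"
proof (cases "J = {}")
  case False
  have rv: "random_variable S (Z i)" if "i \<in> I" for i
    using indep that by (auto simp: indep_vars_def)
  have law: "distr M (PiM J (\<lambda>_. S)) (\<lambda>\<omega>. \<lambda>j\<in>J. Z (\<tau> j) \<omega>) = PiM J (\<lambda>j. distr M S (Z (\<tau> j)))"
    if "inj_on \<tau> J" "\<tau> ` J \<subseteq> I" for \<tau>
    using indep_vars_reindex[OF indep that] False rv that
    by (subst indep_vars_iff_distr_eq_PiM'[symmetric]) auto
  have "expectation (\<lambda>\<omega>. g (\<lambda>j\<in>J. Z (\<tau> j) \<omega>)) = integral\<^sup>L (PiM J (\<lambda>j. distr M S (Z (\<tau> j)))) g"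
    if "inj_on \<tau> J" "\<tau> ` J \<subseteq> I" for \<tau>
    using that rv by (subst law[OF that, symmetric], subst integral_distr) (auto intro!: measurable_restrict g)
  moreover have "PiM J (\<lambda>j. distr M S (Z (\<sigma> j))) = PiM J (\<lambda>j. distr M S (Z (\<rho> j)))"
    using same_law by (rule PiM_cong[OF refl])
  ultimately show ?thesis using \<sigma> \<rho> by simp
qed (simp add: restrict_def)

lemma covariance_commute: "covariance X Y = covariance Y X"
  by (simp add: covariance_def mult.commute)

lemma covariance_eq_expectation_mult:
  fixes X Y :: "'a \<Rightarrow> real"
  assumes "integrable M X" "integrable M Y" "integrable M (\<lambda>\<omega>. X \<omega> * Y \<omega>)"
  shows "covariance X Y = expectation (\<lambda>\<omega>. X \<omega> * Y \<omega>) - expectation X * expectation Y"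
proof -
  have "(\<lambda>\<omega>. (X \<omega> - expectation X) * (Y \<omega> - expectation Y)) =
      (\<lambda>\<omega>. X \<omega> * Y \<omega> - expectation Y * X \<omega> - expectation X * Y \<omega> + expectation X * expectation Y)"
    by (auto simp: algebra_simps)
  then show ?thesis
    using assms by (simp add: covariance_def prob_space)
qed

lemma covariance_scale:
  fixes X Y :: "'a \<Rightarrow> real"
  shows "covariance (\<lambda>\<omega>. c * X \<omega>) (\<lambda>\<omega>. d * Y \<omega>) = c * d * covariance X Y"
proof -
  have "(\<lambda>\<omega>. (c * X \<omega> - c * expectation X) * (d * Y \<omega> - d * expectation Y)) =
      (\<lambda>\<omega>. c * d * ((X \<omega> - expectation X) * (Y \<omega> - expectation Y)))"
    by (auto simp: algebra_simps)
  then show ?thesis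
    by (simp add: covariance_def)
qed

lemma covariance_affine:
  fixes X Y :: "'a \<Rightarrow> real"
  assumes "integrable M X" "integrable M Y"
  shows "covariance (\<lambda>\<omega>. (X \<omega> - a) / s) (\<lambda>\<omega>. (Y \<omega> - b) / r) = covariance X Y / (s * r)"
proof -
  have "(\<lambda>\<omega>. ((X \<omega> - a) / s - (expectation X - a) / s) * ((Y \<omega> - b) / r - (expectation Y - b) / r)) =
      (\<lambda>\<omega>. (X \<omega> - expectation X) * (Y \<omega> - expectation Y) / (s * r))"
    by (auto simp: diff_divide_distrib[symmetric])
  then show ?thesis
    using assms by (simp add: covariance_def prob_space)
qed

lemma covariance_sum:
  fixes X Y :: "_ \<Rightarrow> 'a \<Rightarrow> real"
  assumes "finite A" "finite B"
    and "\<And>a. a \<in> A \<Longrightarrow> integrable M (X a)" "\<And>b. b \<in> B \<Longrightarrow> integrable M (Y b)"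
    and "\<And>a b. a \<in> A \<Longrightarrow> b \<in> B \<Longrightarrow> integrable M (\<lambda>\<omega>. X a \<omega> * Y b \<omega>)"
  shows "covariance (\<lambda>\<omega>. \<Sum>a\<in>A. X a \<omega>) (\<lambda>\<omega>. \<Sum>b\<in>B. Y b \<omega>) =
    (\<Sum>a\<in>A. \<Sum>b\<in>B. covariance (X a) (Y b))"
proof -
  have prod: "(\<lambda>\<omega>. (\<Sum>a\<in>A. X a \<omega>) * (\<Sum>b\<in>B. Y b \<omega>)) = (\<lambda>\<omega>. \<Sum>a\<in>A. \<Sum>b\<in>B. X a \<omega> * Y b \<omega>)"
    by (simp add: sum_distrib_left sum_distrib_right sum.swap[of _ B])
  have "covariance (\<lambda>\<omega>. \<Sum>a\<in>A. X a \<omega>) (\<lambda>\<omega>. \<Sum>b\<in>B. Y b \<omega>) =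
      (\<Sum>a\<in>A. \<Sum>b\<in>B. expectation (\<lambda>\<omega>. X a \<omega> * Y b \<omega>)) -
      (\<Sum>a\<in>A. expectation (X a)) * (\<Sum>b\<in>B. expectation (Y b))"
    using assms by (subst covariance_eq_expectation_mult) (simp_all add: prod)
  also have "\<dots> = (\<Sum>a\<in>A. \<Sum>b\<in>B. covariance (X a) (Y b))"
    using assms by (simp add: covariance_eq_expectation_mult sum_distrib_left sum_distrib_right
        sum_subtractf sum.swap[of _ B])
  finally show ?thesis .
qed

lemma covariance_indep:
  fixes X Y :: "'a \<Rightarrow> real"
  assumes "indep_var borel X borel Y" "integrable M X" "integrable M Y"
  shows "covariance X Y = 0"
proof -
  have "indep_var borel (\<lambda>\<omega>. X \<omega> - expectation X) borel (\<lambda>\<omega>. Y \<omega> - expectation Y)"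
    using indep_var_compose[OF assms(1), of "\<lambda>x. x - expectation X" borel "\<lambda>y. y - expectation Y" borel]
    by (simp add: comp_def)
  then show ?thesis
    using assms by (simp add: covariance_def indep_var_lebesgue_integral prob_space)
qed

end

lemma sum_pattern_count:
  fixes a b c :: real
  assumes "i < m" "j < n"
  shows "(\<Sum>(i', j')\<in>{..<m} \<times> {..<n}.
      if i' = i then if j' = j then a else b else if j' = j then c else 0) =
    a + (real n - 1) * b + (real m - 1) * c"
proof -
  have count: "(\<Sum>k<N. if k = k0 then x else y) = x + (real N - 1) * y"
    if "k0 < N" for k0 N and x y :: real
  proof -
    have "(\<Sum>k<N. if k = k0 then x else y) = (\<Sum>k<N. y + (if k = k0 then x - y else 0))"
      by (intro sum.cong) auto
    then show ?thesis
      using that by (simp add: sum.distrib algebra_simps)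
  qed
  have "(\<Sum>(i', j')\<in>{..<m} \<times> {..<n}.
      if i' = i then if j' = j then a else b else if j' = j then c else 0) =
    (\<Sum>i'<m. if i' = i then (\<Sum>j'<n. if j' = j then a else b) else (\<Sum>j'<n. if j' = j then c else 0))"
    unfolding sum.cartesian_product[symmetric] by (intro sum.cong refl) auto
  also have "\<dots> = (\<Sum>i'<m. if i' = i then a + (real n - 1) * b else c)"
    using assms count[of j n a b] by (simp cong: if_cong)
  also have "\<dots> = a + (real n - 1) * b + (real m - 1) * c"
    using assms by (simp add: count)
  finally show ?thesis .
qed

lemma lift_Suc_less_upto:
  fixes f :: "nat \<Rightarrow> 'a::order"
  assumes steps: "\<And>k. k < K \<Longrightarrow> f k < f (Suc k)" and "a < b" "b \<le> K"
  shows "f a < f b"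
  using assms(2,3)
proof (induction b)
  case (Suc b)
  then show ?case
    using steps[of b] by (cases "a = b") (auto intro: order.strict_trans)
qed simp

locale two_sample = prob_space M for M :: "'a measure" +
  fixes S :: "'b measure" and X Y :: "nat \<Rightarrow> 'a \<Rightarrow> 'b"
  assumes indep_samples: "indep_vars (\<lambda>_. S) (case_sum X Y) UNIV"
    and X_law: "\<And>i. distr M S (X i) = distr M S (X 0)"
    and Y_law: "\<And>j. distr M S (Y j) = distr M S (Y 0)"
begin

lemma measurable_X [measurable]: "X i \<in> M \<rightarrow>\<^sub>M S"
  using indep_samples unfolding indep_vars_def by (metis UNIV_I sum.case(1))

lemma measurable_Y [measurable]: "Y j \<in> M \<rightarrow>\<^sub>M S"
  using indep_samples unfolding indep_vars_def by (metis UNIV_I sum.case(2))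

text \<open>Independence plus identical distribution within each arm make the joint law of
\<open>(X i, Y j, X i', Y j')\<close> depend only on whether \<open>i' = i\<close> and whether \<open>j' = j\<close>; the indices
\<open>0\<close> and \<open>1\<close> below are canonical representatives of these two alternatives.\<close>

lemma expectation_pattern:
  fixes G :: "('b \<times> 'b) \<times> ('b \<times> 'b) \<Rightarrow> real"
  assumes G: "G \<in> borel_measurable ((S \<Otimes>\<^sub>M S) \<Otimes>\<^sub>M (S \<Otimes>\<^sub>M S))"
  shows "expectation (\<lambda>\<omega>. G ((X i \<omega>, Y j \<omega>), (X i' \<omega>, Y j' \<omega>))) =
    expectation (\<lambda>\<omega>. G ((X 0 \<omega>, Y 0 \<omega>),
      (X (if i' = i then 0 else 1) \<omega>, Y (if j' = j then 0 else 1) \<omega>)))"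
proof -
  define a where "a = (if i' = i then 0 else 1 :: nat)"
  define b where "b = (if j' = j then 0 else 1 :: nat)"
  define J where "J = {Inl 0, Inr 0, Inl a, Inr b}"
  define \<sigma> :: "nat + nat \<Rightarrow> nat + nat" where "\<sigma> = map_sum (\<lambda>k. if k = 0 then i else i') (\<lambda>k. if k = 0 then j else j')"
  define g where "g h = G ((h (Inl 0), h (Inr 0)), (h (Inl a), h (Inr b)))" for h :: "nat + nat \<Rightarrow> 'b"
  have g_meas: "g \<in> borel_measurable (PiM J (\<lambda>_. S))"
    unfolding g_def J_def
    by (intro measurable_compose[OF _ G] measurable_Pair measurable_component_singleton) auto
  have \<sigma>_inj: "inj_on \<sigma> J"
    unfolding J_def \<sigma>_def a_def b_def by (cases "i' = i"; cases "j' = j") auto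
  have \<sigma>_law: "distr M S (case_sum X Y (\<sigma> k)) = distr M S (case_sum X Y (id k))" for k
  proof (cases k)
    case (Inl n)
    then show ?thesis
      using X_law[of n] X_law[of "if n = 0 then i else i'"] by (simp add: \<sigma>_def)
  next
    case (Inr n)
    then show ?thesis
      using Y_law[of n] Y_law[of "if n = 0 then j else j'"] by (simp add: \<sigma>_def)
  qed
  have "expectation (\<lambda>\<omega>. g (\<lambda>k\<in>J. case_sum X Y (\<sigma> k) \<omega>)) =
      expectation (\<lambda>\<omega>. g (\<lambda>k\<in>J. case_sum X Y (id k) \<omega>))"
    by (rule expectation_indep_reindex[OF indep_samples \<sigma>_inj _ inj_on_id _ \<sigma>_law g_meas]) auto
  then show ?thesis
    unfolding g_def J_def \<sigma>_def a_def b_def by (cases "i' = i"; cases "j' = j") auto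
qed

lemma covariance_pattern:
  assumes f: "(\<lambda>z. f (fst z) (snd z)) \<in> borel_measurable (S \<Otimes>\<^sub>M S)"
    and g: "(\<lambda>z. g (fst z) (snd z)) \<in> borel_measurable (S \<Otimes>\<^sub>M S)"
  shows "covariance (\<lambda>\<omega>. f (X i \<omega>) (Y j \<omega>)) (\<lambda>\<omega>. g (X i' \<omega>) (Y j' \<omega>)) =
    covariance (\<lambda>\<omega>. f (X 0 \<omega>) (Y 0 \<omega>))
      (\<lambda>\<omega>. g (X (if i' = i then 0 else 1) \<omega>) (Y (if j' = j then 0 else 1) \<omega>))"
proof -
  note [measurable] = measurable_kernel_app[OF f] measurable_kernel_app[OF g]
  have Ef: "expectation (\<lambda>\<omega>. f (X i \<omega>) (Y j \<omega>)) = expectation (\<lambda>\<omega>. f (X 0 \<omega>) (Y 0 \<omega>))"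
    using expectation_pattern[of "\<lambda>z. f (fst (fst z)) (snd (fst z))" i j i j] by simp
  have Eg: "expectation (\<lambda>\<omega>. g (X i' \<omega>) (Y j' \<omega>)) =
      expectation (\<lambda>\<omega>. g (X (if i' = i then 0 else 1) \<omega>) (Y (if j' = j then 0 else 1) \<omega>))"
    using expectation_pattern[of "\<lambda>z. g (fst (snd z)) (snd (snd z))" i j i' j'] by simp
  show ?thesis
    unfolding covariance_def Ef Eg
    by (rule expectation_pattern[where G="\<lambda>z. (f (fst (fst z)) (snd (fst z)) - _) *
        (g (fst (snd z)) (snd (snd z)) - _)", simplified]) measurable
qed

lemma integrable_kernel_mult:
  assumes "bounded_kernel S f" "bounded_kernel S g"
  shows "integrable M (\<lambda>\<omega>. f (X i \<omega>) (Y j \<omega>) * g (X i' \<omega>) (Y j' \<omega>))"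
proof -
  obtain Bf Bg where Bf: "\<And>x y. \<bar>f x y\<bar> \<le> Bf" and Bg: "\<And>x y. \<bar>g x y\<bar> \<le> Bg"
    using assms unfolding bounded_kernel_def by blast
  note [measurable] =
    measurable_kernel_app[OF bounded_kernel_measurable[OF assms(1)]]
    measurable_kernel_app[OF bounded_kernel_measurable[OF assms(2)]]
  have "\<bar>f x y * g x' y'\<bar> \<le> Bf * Bg" for x y x' y'
    unfolding abs_mult using Bf Bg by (meson abs_ge_zero mult_mono order_trans)
  then show ?thesis
    by (intro integrable_const_bound[where B="Bf * Bg"]) auto
qed

lemma integrable_kernel:
  assumes "bounded_kernel S f"
  shows "integrable M (\<lambda>\<omega>. f (X i \<omega>) (Y j \<omega>))"
proof -
  have "bounded_kernel S (\<lambda>_ _. 1)"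
    by (auto simp: bounded_kernel_def intro: exI[of _ 1])
  from integrable_kernel_mult[OF assms this] show ?thesis by simp
qed

lemma covariance_kernel_indep:
  assumes "i \<noteq> i'" "j \<noteq> j'" and f: "bounded_kernel S f" and g: "bounded_kernel S g"
  shows "covariance (\<lambda>\<omega>. f (X i \<omega>) (Y j \<omega>)) (\<lambda>\<omega>. g (X i' \<omega>) (Y j' \<omega>)) = 0"
proof (rule covariance_indep)
  let ?A = "{Inl i, Inr j}" and ?B = "{Inl i', Inr j'}"
  have ind: "indep_var (PiM ?A (\<lambda>_. S)) (\<lambda>\<omega>. \<lambda>k\<in>?A. case_sum X Y k \<omega>)
      (PiM ?B (\<lambda>_. S)) (\<lambda>\<omega>. \<lambda>k\<in>?B. case_sum X Y k \<omega>)"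
    using assms(1,2) by (intro indep_var_restrict[OF indep_samples]) auto
  have meas: "(\<lambda>h. f (h (Inl i)) (h (Inr j))) \<in> borel_measurable (PiM ?A (\<lambda>_. S))"
    "(\<lambda>h. g (h (Inl i')) (h (Inr j'))) \<in> borel_measurable (PiM ?B (\<lambda>_. S))"
    by (auto intro!: measurable_kernel_app[OF bounded_kernel_measurable[OF f]]
        measurable_kernel_app[OF bounded_kernel_measurable[OF g]] measurable_component_singleton)
  from indep_var_compose[OF ind meas]
  show "indep_var borel (\<lambda>\<omega>. f (X i \<omega>) (Y j \<omega>)) borel (\<lambda>\<omega>. g (X i' \<omega>) (Y j' \<omega>))"
    by (simp add: comp_def)
qed (use f g integrable_kernel in auto)

lemma covariance_kernel_pattern:
  assumes f: "bounded_kernel S f" and g: "bounded_kernel S g"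
  shows "covariance (\<lambda>\<omega>. f (X i \<omega>) (Y j \<omega>)) (\<lambda>\<omega>. g (X i' \<omega>) (Y j' \<omega>)) =
    (if i' = i then
       if j' = j then covariance (\<lambda>\<omega>. f (X 0 \<omega>) (Y 0 \<omega>)) (\<lambda>\<omega>. g (X 0 \<omega>) (Y 0 \<omega>))
       else covariance (\<lambda>\<omega>. f (X 0 \<omega>) (Y 0 \<omega>)) (\<lambda>\<omega>. g (X 0 \<omega>) (Y 1 \<omega>))
     else if j' = j then covariance (\<lambda>\<omega>. f (X 0 \<omega>) (Y 0 \<omega>)) (\<lambda>\<omega>. g (X 1 \<omega>) (Y 0 \<omega>))
     else 0)"
  using covariance_pattern[OF f[THEN bounded_kernel_measurable] g[THEN bounded_kernel_measurable],
      of i j i' j'] covariance_kernel_indep[OF _ _ f g, of i i' j j']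
  by auto

lemma covariance_kernel_swap:
  assumes f: "(\<lambda>z. f (fst z) (snd z)) \<in> borel_measurable (S \<Otimes>\<^sub>M S)"
    and g: "(\<lambda>z. g (fst z) (snd z)) \<in> borel_measurable (S \<Otimes>\<^sub>M S)"
    and "a \<le> 1" "b \<le> 1"
  shows "covariance (\<lambda>\<omega>. g (X 0 \<omega>) (Y 0 \<omega>)) (\<lambda>\<omega>. f (X a \<omega>) (Y b \<omega>)) =
    covariance (\<lambda>\<omega>. f (X 0 \<omega>) (Y 0 \<omega>)) (\<lambda>\<omega>. g (X a \<omega>) (Y b \<omega>))"
proof -
  have "(if 0 = a then 0 else 1) = a" "(if 0 = b then 0 else 1) = b"
    using assms(3,4) by auto
  then show ?thesis
    using covariance_pattern[OF f g, of a b 0 0] by (simp add: covariance_commute)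
qed

lemma covariance_kernel_diff:
  assumes u: "bounded_kernel S u" and v: "bounded_kernel S v" and "a \<le> 1" "b \<le> 1"
  shows "covariance (\<lambda>\<omega>. u (X 0 \<omega>) (Y 0 \<omega>) - v (X 0 \<omega>) (Y 0 \<omega>))
      (\<lambda>\<omega>. u (X a \<omega>) (Y b \<omega>) - v (X a \<omega>) (Y b \<omega>)) =
    covariance (\<lambda>\<omega>. u (X 0 \<omega>) (Y 0 \<omega>)) (\<lambda>\<omega>. u (X a \<omega>) (Y b \<omega>)) +
    covariance (\<lambda>\<omega>. v (X 0 \<omega>) (Y 0 \<omega>)) (\<lambda>\<omega>. v (X a \<omega>) (Y b \<omega>)) -
    2 * covariance (\<lambda>\<omega>. u (X 0 \<omega>) (Y 0 \<omega>)) (\<lambda>\<omega>. v (X a \<omega>) (Y b \<omega>))"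
proof -
  let ?U = "\<lambda>i j \<omega>. u (X i \<omega>) (Y j \<omega>)" and ?V = "\<lambda>i j \<omega>. v (X i \<omega>) (Y j \<omega>)"
  have int: "integrable M (?U i j)" "integrable M (?V i j)" for i j
    using u v by (simp_all add: integrable_kernel)
  have int_mult: "integrable M (\<lambda>\<omega>. ?U i j \<omega> * ?U i' j' \<omega>)" "integrable M (\<lambda>\<omega>. ?U i j \<omega> * ?V i' j' \<omega>)"
    "integrable M (\<lambda>\<omega>. ?V i j \<omega> * ?U i' j' \<omega>)" "integrable M (\<lambda>\<omega>. ?V i j \<omega> * ?V i' j' \<omega>)" for i j i' j'
    using u v by (simp_all add: integrable_kernel_mult)
  have "covariance (\<lambda>\<omega>. ?U 0 0 \<omega> - ?V 0 0 \<omega>) (\<lambda>\<omega>. ?U a b \<omega> - ?V a b \<omega>) =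
      covariance (?U 0 0) (?U a b) + covariance (?V 0 0) (?V a b)
      - covariance (?U 0 0) (?V a b) - covariance (?V 0 0) (?U a b)"
    using int int_mult
    by (simp add: covariance_eq_expectation_mult left_diff_distrib right_diff_distrib algebra_simps)
  moreover have "covariance (?V 0 0) (?U a b) = covariance (?U 0 0) (?V a b)"
    using assms by (intro covariance_kernel_swap bounded_kernel_measurable)
  ultimately show ?thesis by simp
qed

definition ustat :: "('b \<Rightarrow> 'b \<Rightarrow> real) \<Rightarrow> nat \<Rightarrow> nat \<Rightarrow> 'a \<Rightarrow> real" where
  "ustat f m n \<omega> = (\<Sum>i<m. \<Sum>j<n. f (X i \<omega>) (Y j \<omega>)) / (real m * real n)"

lemma integrable_ustat:
  assumes "bounded_kernel S f"
  shows "integrable M (ustat f m n)"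
  unfolding ustat_def[abs_def] by (auto intro!: integrable_divide_zero integrable_sum integrable_kernel assms)

theorem covariance_ustat_nested:
  assumes f: "bounded_kernel S f" and "0 < m" "0 < n" "m \<le> m'" "n \<le> n'"
  shows "covariance (ustat f m n) (ustat f m' n') =
    (real n' - 1) / (real m' * real n') *
      covariance (\<lambda>\<omega>. f (X 0 \<omega>) (Y 0 \<omega>)) (\<lambda>\<omega>. f (X 0 \<omega>) (Y 1 \<omega>)) +
    (real m' - 1) / (real m' * real n') *
      covariance (\<lambda>\<omega>. f (X 0 \<omega>) (Y 0 \<omega>)) (\<lambda>\<omega>. f (X 1 \<omega>) (Y 0 \<omega>)) +
    1 / (real m' * real n') *
      covariance (\<lambda>\<omega>. f (X 0 \<omega>) (Y 0 \<omega>)) (\<lambda>\<omega>. f (X 0 \<omega>) (Y 0 \<omega>))"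
proof -
  define F where "F = (\<lambda>p \<omega>. f (X (fst p) \<omega>) (Y (snd p) \<omega>))"
  define C where "C i j = covariance (\<lambda>\<omega>. f (X 0 \<omega>) (Y 0 \<omega>)) (\<lambda>\<omega>. f (X i \<omega>) (Y j \<omega>))"
    for i j :: nat
  let ?P = "\<lambda>m n. {..<m} \<times> {..<n}"
  have ustat_eq: "ustat f m n = (\<lambda>\<omega>. 1 / (real m * real n) * (\<Sum>p\<in>?P m n. F p \<omega>))" for m n
    by (simp add: fun_eq_iff ustat_def F_def sum.cartesian_product case_prod_beta)
  have row: "(\<Sum>p'\<in>?P m' n'. covariance (F p) (F p')) = C 0 0 + (real n' - 1) * C 0 1 + (real m' - 1) * C 1 0"
    if "p \<in> ?P m n" for p
  proof -
    obtain i j where p: "p = (i, j)"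
      by (cases p)
    with that assms have "i < m'" "j < n'"
      by auto
    moreover have "covariance (F p) (F p') =
        (if fst p' = i then if snd p' = j then C 0 0 else C 0 1 else if snd p' = j then C 1 0 else 0)"
      for p'
      using covariance_kernel_pattern[OF f f, of i j "fst p'" "snd p'"] by (simp add: p F_def C_def)
    ultimately show ?thesis
      using sum_pattern_count[of i m' j n' "C 0 0" "C 0 1" "C 1 0"] by (simp add: case_prod_beta)
  qed
  have "covariance (ustat f m n) (ustat f m' n') =
      1 / (real m * real n) * (1 / (real m' * real n')) * (\<Sum>p\<in>?P m n. \<Sum>p'\<in>?P m' n'. covariance (F p) (F p'))"
    unfolding ustat_eq covariance_scale using f
    by (subst covariance_sum) (auto simp: F_def integrable_kernel integrable_kernel_mult)
  also have "\<dots> = (C 0 0 + (real n' - 1) * C 0 1 + (real m' - 1) * C 1 0) / (real m' * real n')"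
    using assms by (simp add: row)
  finally show ?thesis
    by (simp add: C_def add_divide_distrib)
qed

end

theorem proposition1:
  fixes M :: "'a measure"
    and Q K :: nat
    and kind :: "nat \<Rightarrow> outcome_kind"
    and D D' :: "nat \<Rightarrow> 'a \<Rightarrow> obs"
    and m n :: "nat \<Rightarrow> nat"
    and p q :: nat
  assumes prob: "prob_space M"
    and Q_pos: "1 \<le> Q"
    and margins: "\<And>r e. r \<in> {1..Q} \<Longrightarrow> kind r = Margin e \<Longrightarrow> 0 \<le> e"
    and meas_D: "\<And>i. D i \<in> measurable M (obs_space Q)"
    and meas_D': "\<And>j. D' j \<in> measurable M (obs_space Q)"
    and indep: "prob_space.indep_vars M (\<lambda>_. obs_space Q) (case_sum D D') UNIV"
    and ident_D: "\<And>i. distr M (obs_space Q) (D i) = distr M (obs_space Q) (D 0)"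
    and ident_D': "\<And>j. distr M (obs_space Q) (D' j) = distr M (obs_space Q) (D' 0)"
    and m0: "m 0 = 0" and n0: "n 0 = 0"
    and m_incr: "\<And>k. k < K \<Longrightarrow> m k < m (Suc k)"
    and n_incr: "\<And>k. k < K \<Longrightarrow> n k < n (Suc k)"
    and pq: "1 \<le> p" "p < q" "q \<le> K"
  defines "w \<equiv> phi_w Q kind" and "l \<equiv> phi_l Q kind"
  defines "xi10 \<equiv> (\<lambda>u v. prob_space.covariance M
              (\<lambda>\<omega>. u (D 0 \<omega>) (D' 0 \<omega>)) (\<lambda>\<omega>. v (D 0 \<omega>) (D' 1 \<omega>)))"
    and "xi01 \<equiv> (\<lambda>u v. prob_space.covariance M
              (\<lambda>\<omega>. u (D 0 \<omega>) (D' 0 \<omega>)) (\<lambda>\<omega>. v (D 1 \<omega>) (D' 0 \<omega>)))"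
    and "xi11 \<equiv> (\<lambda>u v. prob_space.covariance M
              (\<lambda>\<omega>. u (D 0 \<omega>) (D' 0 \<omega>)) (\<lambda>\<omega>. v (D 0 \<omega>) (D' 0 \<omega>)))"
  defines "tau \<equiv> (\<lambda>\<nu>. prob_space.expectation M (\<lambda>\<omega>. \<nu> (D 0 \<omega>) (D' 0 \<omega>)))"
  defines "U \<equiv> (\<lambda>\<nu> k \<omega>. (1 / (real (m k) * real (n k))) *
              (\<Sum>i<m k. \<Sum>j<n k. \<nu> (D i \<omega>) (D' j \<omega>)))"
  defines "dU \<equiv> (\<lambda>k \<omega>. U w k \<omega> - U l k \<omega>)"
    and "dtau \<equiv> tau w - tau l"
  defines "V \<equiv> (\<lambda>k. (real (n k) - 1) / (real (m k) * real (n k)) *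
                   (xi10 w w + xi10 l l - 2 * xi10 w l)
                 + (real (m k) - 1) / (real (m k) * real (n k)) *
                   (xi01 w w + xi01 l l - 2 * xi01 w l)
                 + 1 / (real (m k) * real (n k)) *
                   (xi11 w w + xi11 l l - 2 * xi11 w l))"
  defines "Dstat \<equiv> (\<lambda>k \<omega>. (dU k \<omega> - dtau) / sqrt (V k))"
  assumes V_pos: "\<And>k. k \<in> {1..K} \<Longrightarrow> V k > 0"
  shows "prob_space.covariance M (dU p) (dU q) = V q \<and>
         prob_space.covariance M (Dstat p) (Dstat q) = sqrt (V q / V p)"
proof -
  interpret two_sample M "obs_space Q" D D'
    using prob indep ident_D ident_D' by (simp add: two_sample_def two_sample_axioms_def)
  define \<phi> where "\<phi> = (\<lambda>x y. w x y - l x y)"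
  have w: "bounded_kernel (obs_space Q) w" and l: "bounded_kernel (obs_space Q) l"
    by (simp_all add: w_def l_def bounded_kernel_phi_w bounded_kernel_phi_l)
  have \<phi>: "bounded_kernel (obs_space Q) \<phi>"
    unfolding \<phi>_def using w l by (rule bounded_kernel_diff)
  have dU_eq: "dU k = ustat \<phi> (m k) (n k)" for k
    by (simp add: fun_eq_iff dU_def U_def ustat_def \<phi>_def sum_subtractf diff_divide_distrib)
  have "m 0 < m p" "n 0 < n p" "m p < m q" "n p < n q"
    using pq by (auto intro: lift_Suc_less_upto[of K m] lift_Suc_less_upto[of K n] m_incr n_incr)
  then have sizes: "0 < m p" "0 < n p" "m p \<le> m q" "n p \<le> n q"
    using m0 n0 by auto
  have cov: "covariance (dU p) (dU q) = V q"
    unfolding dU_eq covariance_ustat_nested[OF \<phi> sizes]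
    unfolding V_def xi10_def xi01_def xi11_def \<phi>_def
    using covariance_kernel_diff[OF w l] by simp
  have "V p > 0" "V q > 0"
    using V_pos pq by auto
  have "covariance (Dstat p) (Dstat q) = covariance (dU p) (dU q) / (sqrt (V p) * sqrt (V q))"
    unfolding Dstat_def dU_eq by (intro covariance_affine integrable_ustat \<phi>)
  also have "\<dots> = sqrt (V q) * sqrt (V q) / (sqrt (V p) * sqrt (V q))"
    unfolding cov using \<open>V q > 0\<close> by simp
  also have "\<dots> = sqrt (V q) / sqrt (V p)"
    using \<open>V q > 0\<close> by (intro nonzero_mult_divide_mult_cancel_right) simp
  also have "\<dots> = sqrt (V q / V p)"
    by (simp add: real_sqrt_divide)
  finally show ?thesis
    using cov by simp
qed
end
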